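(* Let $l_1\geq l_2\geq 3$ be integers. Let $U_1(l_1,l_2)$ be the graph obtained from the cycle $C_{l_1}$ by attaching a pendent path of length $l_2$ at a vertex $u$ of the cycle, and $U_2(l_1,l_2)$ the graph obtained from the cycle $C_{l_2}$ by attaching a pendent path of length $l_1$ at a vertex $v$ of the cycle. Then $$n(U_1(l_1,l_2))\geq n(U_2(l_1,l_2))\quad\text{and}\quad n(u,U_1(l_1,l_2))\geq n(v,U_2(l_1,l_2)),$$ with equality if and only if $l_1=l_2$.
   Context: A pendent path of length $\ell$ attached at $w$ consists of $\ell$ new vertices $x_1,\dots,x_\ell$ and edges $wx_1,\dots,x_{\ell-1}x_\ell$. A subtree of a graph $G$ is a subgraph that is a tree (distinguished as subgraphs); $n(G)$ is the number of subtrees of $G$, counting also the empty subtree, and $n(x,G)$ is the number of subtrees of $G$ containing the vertex $x$. *)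

theory Defs
  imports Main
begin

type_synonym graph = "nat set \<times> nat set set"

definition is_graph :: "graph \<Rightarrow> bool" where
  "is_graph G \<longleftrightarrow> (\<forall>e\<in>snd G. \<exists>a b. a \<in> fst G \<and> b \<in> fst G \<and> a \<noteq> b \<and> e = {a, b})"

definition connected :: "graph \<Rightarrow> bool" where
  "connected G \<longleftrightarrow> (\<forall>x\<in>fst G. \<forall>y\<in>fst G. (\<lambda>a b. {a, b} \<in> snd G)\<^sup>*\<^sup>* x y)"

definition has_cycle :: "graph \<Rightarrow> bool" where
  "has_cycle G \<longleftrightarrow> (\<exists>xs. length xs \<ge> 3 \<and> distinct xs \<and> set xs \<subseteq> fst G \<and>
      (\<forall>i. Suc i < length xs \<longrightarrow> {xs ! i, xs ! Suc i} \<in> snd G) \<and>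
      {last xs, hd xs} \<in> snd G)"

definition is_tree :: "graph \<Rightarrow> bool" where
  "is_tree T \<longleftrightarrow> is_graph T \<and> fst T \<noteq> {} \<and> finite (fst T) \<and> connected T \<and> \<not> has_cycle T"

definition subtree_of :: "graph \<Rightarrow> graph \<Rightarrow> bool" where
  "subtree_of T G \<longleftrightarrow> fst T \<subseteq> fst G \<and> snd T \<subseteq> snd G \<and> is_tree T"

text \<open>n(G): number of subtrees of G, counting also the empty subtree.\<close>
definition num_subtrees :: "graph \<Rightarrow> nat" where
  "num_subtrees G = card {T. subtree_of T G} + 1"

definition num_subtrees_at :: "nat \<Rightarrow> graph \<Rightarrow> nat" where
  "num_subtrees_at x G = card {T. subtree_of T G \<and> x \<in> fst T}"

text \<open>Cycle C_c on vertices 0..c-1 with a pendent path of length p attached at vertex 0;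
  the path vertices are c, ..., c+p-1, with edges {0,c}, {c,c+1}, ..., {c+p-2,c+p-1}.\<close>
definition cycle_with_path :: "nat \<Rightarrow> nat \<Rightarrow> graph" where
  "cycle_with_path c p =
     ({0..<c+p},
      {{i, (i + 1) mod c} | i. i < c} \<union>
      {{if i = 0 then 0 else c + i - 1, c + i} | i. i < p})"

end

(*
  When a new leaf v is attached to a vertex u of a graph G, every subtree of the new graph
  is a subtree of G, the single vertex v, or a subtree of G through u extended by the edge
  uv.  Attaching the pendent path one vertex at a time therefore yields linear recurrences for
  the number of subtrees, of subtrees through the root, through the end of the path, and
  through both.  Their initial values come from the cycle C_c: a subtree of C_c misses some
  edge, so it is a segment of a Hamiltonian path of C_c, i.e. one of the c^2 arcs, and
  c(c+1)/2 of these arcs pass through a fixed vertex.  For C_c with a pendent path of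
  length p at u this gives
    2 n(U) = 2c^2 + p(p+1) + p c(c+1) + 2   and   2 n(u,U) = (p+1) c(c+1).
  With d = l1 - l2, twice the differences between U_1 and U_2 are d((l1+1)(l2+1) - 2)
  and d(l1+1)(l2+1), both positive exactly when d > 0.
*)

theory Submission
  imports Defs
begin

section \<open>Subtrees under leaf addition\<close>

definition subtrees :: "graph \<Rightarrow> graph set" where
  "subtrees G = {T. subtree_of T G}"

lemma num_subtrees_at_eq: "num_subtrees_at x G = card {T \<in> subtrees G. x \<in> fst T}"
  by (simp add: num_subtrees_at_def subtrees_def)

abbreviation reachable :: "nat set set \<Rightarrow> nat \<Rightarrow> nat \<Rightarrow> bool" where
  "reachable E \<equiv> (\<lambda>a b. {a, b} \<in> E)\<^sup>*\<^sup>*"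

lemma reachable_sym: "reachable E x y \<Longrightarrow> reachable E y x"
  by (rule sympD[OF symp_rtranclp]) (auto simp: symp_def insert_commute)

lemma reachable_mono: "reachable E x y \<Longrightarrow> E \<subseteq> E' \<Longrightarrow> reachable E' x y"
  by (erule rtranclp_mono[THEN predicate2D, rotated]) auto

lemma is_graph_edgeD: "is_graph G \<Longrightarrow> {a, b} \<in> snd G \<Longrightarrow> a \<in> fst G \<and> b \<in> fst G"
  unfolding is_graph_def by (auto simp: doubleton_eq_iff)

lemma has_cycle_mono:
  "has_cycle G \<Longrightarrow> fst G \<subseteq> fst G' \<Longrightarrow> snd G \<subseteq> snd G' \<Longrightarrow> has_cycle G'"
  unfolding has_cycle_def by (auto 0 3)

lemma subtree_of_mono:
  "subtree_of T G \<Longrightarrow> fst G \<subseteq> fst G' \<Longrightarrow> snd G \<subseteq> snd G' \<Longrightarrow> subtree_of T G'"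
  unfolding subtree_of_def by blast

lemma finite_subtrees: "finite (fst G) \<Longrightarrow> finite (snd G) \<Longrightarrow> finite (subtrees G)"
  by (rule finite_subset[of _ "Pow (fst G) \<times> Pow (snd G)"]) (auto simp: subtrees_def subtree_of_def)

lemma is_tree_singleton: "is_tree ({x}, {})"
  unfolding is_tree_def
proof (intro conjI)
  show "\<not> has_cycle ({x}, {})"
  proof
    assume "has_cycle ({x}, {})"
    then obtain xs where "length xs \<ge> 3" "distinct xs" "set xs \<subseteq> {x}"
      unfolding has_cycle_def by auto
    then have "card (set xs) \<ge> 3" "card (set xs) \<le> 1"
      by (auto simp: distinct_card dest: card_mono[rotated])
    then show False by simp
  qed
qed (auto simp: is_graph_def connected_def)

lemma Suc_Suc_mod_neq:
  assumes "k < n" "3 \<le> (n::nat)"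
  shows "Suc (Suc k) mod n \<noteq> k"
  using assms by (cases "Suc (Suc k) < n") (auto simp: le_mod_geq)

lemma cycle_vertex_two_neighbours:
  assumes len: "length xs \<ge> 3" and dist: "distinct xs"
    and step: "\<forall>i. Suc i < length xs \<longrightarrow> {xs ! i, xs ! Suc i} \<in> E"
    and close: "{last xs, hd xs} \<in> E" and x: "x \<in> set xs"
  obtains y z where "y \<noteq> z" "{x, y} \<in> E" "{x, z} \<in> E"
proof -
  define n where "n = length xs"
  have edge: "{xs ! i, xs ! (Suc i mod n)} \<in> E" if "i < n" for i
  proof (cases "Suc i < n")
    case False
    then have i: "Suc i = n" using that by simp
    have "xs \<noteq> []" using len by auto
    then have "last xs = xs ! i" "hd xs = xs ! (Suc i mod n)"
      using i[symmetric] unfolding n_def by (simp_all add: last_conv_nth hd_conv_nth)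
    then show ?thesis using close by simp
  qed (use step n_def in simp)
  obtain k where k: "k < n" "x = xs ! k" using x n_def by (metis in_set_conv_nth)
  define p where "p = (k + n - 1) mod n"
  have n: "0 < n" using len unfolding n_def by linarith
  then have p: "p < n" by (simp add: p_def)
  have "Suc (k + n - 1) = k + n" using n by simp
  then have "Suc p mod n = k" using k(1) unfolding p_def mod_Suc_eq by simp
  then have "{x, xs ! p} \<in> E" using edge[OF p] k by (simp add: insert_commute)
  moreover have "{x, xs ! (Suc k mod n)} \<in> E" using edge k by simp
  moreover have "xs ! p \<noteq> xs ! (Suc k mod n)"
  proof -
    have "p \<noteq> Suc k mod n"
    proof
      assume "p = Suc k mod n"
      then have "Suc (Suc k) mod n = k" using \<open>Suc p mod n = k\<close> by (simp add: mod_Suc_eq)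
      then show False using Suc_Suc_mod_neq[of k n] k(1) len n_def by simp
    qed
    moreover have "Suc k mod n < n" using n by simp
    ultimately show ?thesis using dist p n_def by (simp add: nth_eq_iff_index_eq)
  qed
  ultimately show ?thesis using that by blast
qed

definition add_leaf :: "nat \<Rightarrow> nat \<Rightarrow> graph \<Rightarrow> graph" where
  "add_leaf u v G = (insert v (fst G), insert {u, v} (snd G))"

lemma fst_add_leaf [simp]: "fst (add_leaf u v G) = insert v (fst G)"
  and snd_add_leaf [simp]: "snd (add_leaf u v G) = insert {u, v} (snd G)"
  by (simp_all add: add_leaf_def)

lemma is_graph_add_leaf:
  "is_graph G \<Longrightarrow> u \<in> fst G \<Longrightarrow> v \<notin> fst G \<Longrightarrow> is_graph (add_leaf u v G)"
  unfolding is_graph_def by (metis fst_add_leaf insertE insertI1 insertI2 snd_add_leaf)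

lemma edge_at_new_leaf:
  assumes "is_graph G" "v \<notin> fst G" "{v, z} \<in> snd (add_leaf u v G)"
  shows "z = u"
  using assms is_graph_edgeD[of G v z] by (auto simp: doubleton_eq_iff)

lemma has_cycle_add_leafD:
  assumes cyc: "has_cycle (add_leaf u v G)" and G: "is_graph G" "v \<notin> fst G"
  shows "has_cycle G"
proof -
  obtain xs where len: "length xs \<ge> 3" and dist: "distinct xs"
    and sub: "set xs \<subseteq> insert v (fst G)"
    and step: "\<forall>i. Suc i < length xs \<longrightarrow> {xs ! i, xs ! Suc i} \<in> insert {u, v} (snd G)"
    and close: "{last xs, hd xs} \<in> insert {u, v} (snd G)"
    using cyc unfolding has_cycle_def by auto
  have "v \<notin> set xs"
  proof
    assume "v \<in> set xs"
    then obtain y z where "y \<noteq> z" "{v, y} \<in> insert {u, v} (snd G)" "{v, z} \<in> insert {u, v} (snd G)"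
      using cycle_vertex_two_neighbours[OF len dist step close] by blast
    then show False using edge_at_new_leaf[OF G] by (metis snd_add_leaf)
  qed
  have "xs \<noteq> []" using len by auto
  then have "last xs \<in> set xs" "hd xs \<in> set xs" by simp_all
  moreover have "{a, b} \<noteq> {u, v}" if "a \<in> set xs" "b \<in> set xs" for a b
    using that \<open>v \<notin> set xs\<close> by (auto simp: doubleton_eq_iff)
  ultimately show ?thesis
    unfolding has_cycle_def using len dist sub step close \<open>v \<notin> set xs\<close>
    by (intro exI[of _ xs]) auto
qed

lemma connected_add_leaf:
  assumes con: "connected G" and u: "u \<in> fst G"
  shows "connected (add_leaf u v G)"
proof -
  have to_u: "reachable (snd (add_leaf u v G)) x u" if "x \<in> fst (add_leaf u v G)" for x
  proof (cases "x = v")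
    case True
    then show ?thesis by (simp add: insert_commute r_into_rtranclp)
  next
    case False
    then have "reachable (snd G) x u" using that con u by (simp add: connected_def)
    then show ?thesis by (rule reachable_mono) auto
  qed
  show ?thesis
    unfolding connected_def using to_u reachable_sym by (blast intro: rtranclp_trans)
qed

lemma is_tree_add_leaf:
  assumes "is_tree T" "u \<in> fst T" "v \<notin> fst T"
  shows "is_tree (add_leaf u v T)"
proof -
  have T: "is_graph T" "connected T" "\<not> has_cycle T" "finite (fst T)"
    using assms(1) by (simp_all add: is_tree_def)
  show ?thesis
    unfolding is_tree_def
    using is_graph_add_leaf[OF T(1) assms(2,3)] connected_add_leaf[OF T(2) assms(2)]
      has_cycle_add_leafD[OF _ T(1) assms(3)] T(3,4) by auto
qed

lemma subtree_of_add_leaf: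
  assumes "subtree_of T G" "u \<in> fst T" "v \<notin> fst G"
  shows "subtree_of (add_leaf u v T) (add_leaf u v G)"
proof -
  have "v \<notin> fst T" using assms by (auto simp: subtree_of_def)
  then show ?thesis using assms is_tree_add_leaf by (auto simp: subtree_of_def)
qed

lemma reachable_avoiding_leaf:
  assumes leaf: "\<And>z. {v, z} \<in> F \<Longrightarrow> z = u" and "u \<noteq> v"
    and "reachable F x y" "x \<noteq> v" "y \<noteq> v"
  shows "reachable (F - {{u, v}}) x y"
proof -
  \<comment> \<open>a walk from x that enters the leaf v does so from u\<close>
  have "if y = v then reachable (F - {{u, v}}) x u else reachable (F - {{u, v}}) x y"
    using \<open>reachable F x y\<close>
  proof (induction rule: rtranclp_induct)
    case (step y z)
    consider "y = v" | "z = v" | "y \<noteq> v" "z \<noteq> v" by blast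
    then show ?case
    proof cases
      case 1
      then show ?thesis using step leaf \<open>u \<noteq> v\<close> by auto
    next
      case 2
      then have "y = u" using step(2) leaf by (simp add: insert_commute)
      then show ?thesis using step 2 \<open>u \<noteq> v\<close> by simp
    next
      case 3
      then have "{y, z} \<in> F - {{u, v}}" using step(2) by (auto simp: doubleton_eq_iff)
      then show ?thesis using step 3 by (simp add: rtranclp.rtrancl_into_rtrancl)
    qed
  qed (use \<open>x \<noteq> v\<close> in simp)
  then show ?thesis using \<open>y \<noteq> v\<close> by simp
qed

lemma is_tree_remove_leaf:
  assumes T: "is_tree T" and v: "v \<in> fst T" "fst T \<noteq> {v}" and "u \<noteq> v"
    and leaf: "\<And>z. {v, z} \<in> snd T \<Longrightarrow> z = u"
  defines "T0 \<equiv> (fst T - {v}, snd T - {{u, v}})"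
  shows "u \<in> fst T0" "is_tree T0" "T = add_leaf u v T0"
proof -
  have gT: "is_graph T" and con: "connected T" and nc: "\<not> has_cycle T" and fin: "finite (fst T)"
    using T by (simp_all add: is_tree_def)
  obtain w where w: "w \<in> fst T" "w \<noteq> v" using v by blast
  have "reachable (snd T) v w" using con v(1) w(1) by (simp add: connected_def)
  then obtain z where "{v, z} \<in> snd T" using w(2) by (cases rule: converse_rtranclpE) auto
  then have uv: "{u, v} \<in> snd T" using leaf by (metis insert_commute)
  then show u: "u \<in> fst T0" using is_graph_edgeD[OF gT] \<open>u \<noteq> v\<close> by (simp add: T0_def)
  have "is_graph T0"
    unfolding is_graph_def
  proof
    fix e assume e: "e \<in> snd T0"
    then have "e \<in> snd T" by (simp add: T0_def)
    then obtain a b where ab: "a \<in> fst T" "b \<in> fst T" "a \<noteq> b" "e = {a, b}"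
      using gT unfolding is_graph_def by blast
    have "v \<notin> e"
    proof
      assume "v \<in> e"
      then obtain z where z: "e = {v, z}" using ab by auto
      then have "z = u" using leaf[of z] \<open>e \<in> snd T\<close> by simp
      then show False using e z by (simp add: T0_def insert_commute)
    qed
    then show "\<exists>a b. a \<in> fst T0 \<and> b \<in> fst T0 \<and> a \<noteq> b \<and> e = {a, b}"
      using ab by (auto simp: T0_def)
  qed
  moreover have "connected T0"
    unfolding connected_def
    using con reachable_avoiding_leaf[OF leaf \<open>u \<noteq> v\<close>] by (auto simp: T0_def connected_def)
  moreover have "\<not> has_cycle T0"
    using nc has_cycle_mono[of T0 T] by (auto simp: T0_def)
  ultimately show "is_tree T0" using u fin by (auto simp: is_tree_def T0_def)
  show "T = add_leaf u v T0" using v(1) uv by (simp add: add_leaf_def T0_def insert_absorb prod_eq_iff)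
qed

lemma subtrees_add_leaf:
  assumes G: "is_graph G" "u \<in> fst G" "v \<notin> fst G"
  shows "subtrees (add_leaf u v G) =
    subtrees G \<union> {({v}, {})} \<union> add_leaf u v ` {T \<in> subtrees G. u \<in> fst T}"
proof (intro equalityI subsetI)
  fix T assume "T \<in> subtrees (add_leaf u v G)"
  then have sub: "fst T \<subseteq> insert v (fst G)" "snd T \<subseteq> insert {u, v} (snd G)" and "is_tree T"
    by (auto simp: subtrees_def subtree_of_def)
  then have gT: "is_graph T" by (simp add: is_tree_def)
  consider "v \<notin> fst T" | "fst T = {v}" | "v \<in> fst T" "fst T \<noteq> {v}" by blast
  then show "T \<in> subtrees G \<union> {({v}, {})} \<union> add_leaf u v ` {T \<in> subtrees G. u \<in> fst T}"
  proof cases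
    case 1
    then have "{u, v} \<notin> snd T" using is_graph_edgeD[OF gT] by blast
    then have "subtree_of T G" using sub 1 \<open>is_tree T\<close> by (auto simp: subtree_of_def)
    then show ?thesis by (simp add: subtrees_def)
  next
    case 2
    then have "snd T = {}" using gT unfolding is_graph_def by force
    then show ?thesis using 2 by (simp add: prod_eq_iff)
  next
    case 3
    have leaf: "z = u" if "{v, z} \<in> snd T" for z
      using edge_at_new_leaf[OF G(1,3)] that sub(2) by auto
    define T0 where "T0 = (fst T - {v}, snd T - {{u, v}})"
    have "u \<noteq> v" using G by auto
    note T0 = is_tree_remove_leaf[OF \<open>is_tree T\<close> 3 this leaf, folded T0_def]
    have "subtree_of T0 G" using T0(2) sub by (auto simp: subtree_of_def T0_def)
    then show ?thesis using T0(1,3) by (auto simp: subtrees_def)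
  qed
next
  fix T assume "T \<in> subtrees G \<union> {({v}, {})} \<union> add_leaf u v ` {T \<in> subtrees G. u \<in> fst T}"
  then consider "subtree_of T G" | "T = ({v}, {})"
    | T0 where "subtree_of T0 G" "u \<in> fst T0" "T = add_leaf u v T0"
    unfolding subtrees_def by blast
  then have "subtree_of T (add_leaf u v G)"
  proof cases
    case 1
    then show ?thesis by (rule subtree_of_mono) auto
  next
    case 2
    then show ?thesis using is_tree_singleton by (simp add: subtree_of_def)
  next
    case 3
    then show ?thesis using subtree_of_add_leaf G(3) by simp
  qed
  then show "T \<in> subtrees (add_leaf u v G)" by (simp add: subtrees_def)
qed

lemma inj_on_add_leaf: "inj_on (add_leaf u v) {T. is_graph T \<and> v \<notin> fst T}"
proof (rule inj_onI)
  have no_uv: "{u, v} \<notin> snd T" if "T \<in> {T. is_graph T \<and> v \<notin> fst T}" for T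
    using that is_graph_edgeD[of T u v] by blast
  fix S T assume "S \<in> {T. is_graph T \<and> v \<notin> fst T}" "T \<in> {T. is_graph T \<and> v \<notin> fst T}"
    and eq: "add_leaf u v S = add_leaf u v T"
  then have "v \<notin> fst S" "v \<notin> fst T" "{u, v} \<notin> snd S" "{u, v} \<notin> snd T"
    using no_uv by blast+
  moreover have "insert v (fst S) = insert v (fst T)" "insert {u, v} (snd S) = insert {u, v} (snd T)"
    using eq by (metis fst_add_leaf, metis snd_add_leaf)
  ultimately show "S = T" by (metis prod_eqI insert_ident)
qed

lemma card_subtrees_add_leaf:
  assumes G: "is_graph G" "u \<in> fst G" "v \<notin> fst G" and fin: "finite (fst G)" "finite (snd G)"
  shows "card {T \<in> subtrees (add_leaf u v G). P (fst T)} =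
    card {T \<in> subtrees G. P (fst T)} + (if P {v} then 1 else 0)
    + card {T \<in> subtrees G. u \<in> fst T \<and> P (insert v (fst T))}"
proof -
  let ?A = "{T \<in> subtrees G. P (fst T)}"
  let ?B = "if P {v} then {({v}, {})} else {}"
  let ?C = "{T \<in> subtrees G. u \<in> fst T \<and> P (insert v (fst T))}"
  have in_G: "is_graph T" "v \<notin> fst T" if "T \<in> subtrees G" for T
    using that G(3) unfolding subtrees_def subtree_of_def is_tree_def by blast+
  have "{T \<in> subtrees (add_leaf u v G). P (fst T)} = ?A \<union> ?B \<union> add_leaf u v ` ?C"
    unfolding subtrees_add_leaf[OF G] by auto
  moreover have "finite ?A" "finite ?C" using finite_subtrees[OF fin] by simp_all
  moreover have "?A \<inter> ?B = {}" using in_G(2) by (simp split: if_split) fastforce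
  moreover have "(?A \<union> ?B) \<inter> add_leaf u v ` ?C = {}"
  proof -
    have "add_leaf u v T \<notin> ?A \<union> ?B" for T
      using in_G(2)[of "add_leaf u v T"] by (auto simp: add_leaf_def)
    then show ?thesis by (metis (no_types, lifting) disjoint_iff imageE)
  qed
  moreover have "card (add_leaf u v ` ?C) = card ?C"
    by (rule card_image[OF inj_on_subset[OF inj_on_add_leaf]]) (use in_G in blast)
  moreover have "card ?B = (if P {v} then 1 else 0)" by simp
  ultimately show ?thesis by (simp add: card_Un_disjoint)
qed

section \<open>Subtrees of paths\<close>

definition path_segment :: "(nat \<Rightarrow> nat) \<Rightarrow> nat \<Rightarrow> nat \<Rightarrow> graph" where
  "path_segment f i j = (f ` {i..j}, (\<lambda>t. {f t, f (Suc t)}) ` {i..<j})"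

lemma fst_path_segment [simp]: "fst (path_segment f i j) = f ` {i..j}"
  by (simp add: path_segment_def)

lemma path_segment_same: "path_segment f i i = ({f i}, {})"
  by (simp add: path_segment_def)

lemma path_segment_Suc:
  assumes "i \<le> j"
  shows "path_segment f i (Suc j) = add_leaf (f j) (f (Suc j)) (path_segment f i j)"
proof -
  have "{i..Suc j} = insert (Suc j) {i..j}" using assms by auto
  moreover have "{i..<Suc j} = insert j {i..<j}" using assms by auto
  ultimately show ?thesis by (simp add: path_segment_def add_leaf_def)
qed

lemma path_segment_shift:
  assumes "i \<le> j"
  shows "path_segment f i j = path_segment (\<lambda>t. f (i + t)) 0 (j - i)"
proof -
  have shift: "{i..j} = (+) i ` {0..j - i}" "{i..<j} = (+) i ` {0..<j - i}"
    using assms by (simp_all add: image_add_atLeastAtMost image_add_atLeastLessThan)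
  show ?thesis unfolding path_segment_def shift image_image by simp
qed

lemma is_graph_path_segment:
  assumes "inj_on f {i..j}"
  shows "is_graph (path_segment f i j)"
  unfolding is_graph_def
proof
  fix e assume "e \<in> snd (path_segment f i j)"
  then obtain t where t: "i \<le> t" "t < j" "e = {f t, f (Suc t)}" by (auto simp: path_segment_def)
  moreover have "f t \<noteq> f (Suc t)" using inj_onD[OF assms, of t "Suc t"] t by auto
  moreover have "f t \<in> fst (path_segment f i j)" "f (Suc t) \<in> fst (path_segment f i j)"
    using t by auto
  ultimately show
    "\<exists>a b. a \<in> fst (path_segment f i j) \<and> b \<in> fst (path_segment f i j) \<and> a \<noteq> b \<and> e = {a, b}"
    by blast
qed

lemma subtrees_singleton: "subtrees ({x}, {}) = {({x}, {})}"
proof -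
  have "T = ({x}, {})" if "subtree_of T ({x}, {})" for T
    using that by (auto simp: subtree_of_def is_tree_def prod_eq_iff)
  then show ?thesis using is_tree_singleton by (auto simp: subtrees_def subtree_of_def)
qed

lemma path_segments_upto_Suc:
  "{path_segment f i j | i j. i \<le> j \<and> j \<le> Suc n} =
    {path_segment f i j | i j. i \<le> j \<and> j \<le> n} \<union> {({f (Suc n)}, {})}
    \<union> (\<lambda>i. path_segment f i (Suc n)) ` {..n}" (is "?L = ?R")
proof
  have "path_segment f i (Suc n) \<in> ?L" if "i \<le> n" for i using that by force
  moreover have "({f (Suc n)}, {}) \<in> ?L" using path_segment_same[of f "Suc n"] by force
  moreover have "{path_segment f i j | i j. i \<le> j \<and> j \<le> n} \<subseteq> ?L" by force
  ultimately show "?R \<subseteq> ?L" by blast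
  show "?L \<subseteq> ?R" by (auto simp: le_Suc_eq path_segment_same[symmetric])
qed

lemma subtrees_path_segment:
  assumes "inj_on f {..n}"
  shows "subtrees (path_segment f 0 n) = {path_segment f i j | i j. i \<le> j \<and> j \<le> n}"
  using assms
proof (induction n)
  case 0
  then show ?case by (simp add: path_segment_same subtrees_singleton)
next
  case (Suc n)
  let ?S = "{path_segment f i j | i j. i \<le> j \<and> j \<le> n}"
  have inj: "inj_on f {..n}" using Suc.prems by (rule inj_on_subset) auto
  have "is_graph (path_segment f 0 n)"
    using inj by (intro is_graph_path_segment) (simp add: atLeast0AtMost)
  moreover have "f n \<in> fst (path_segment f 0 n)" by simp
  moreover have "f (Suc n) \<notin> fst (path_segment f 0 n)"
    using Suc.prems by (auto dest: inj_onD)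
  ultimately have "subtrees (path_segment f 0 (Suc n)) =
      ?S \<union> {({f (Suc n)}, {})} \<union> add_leaf (f n) (f (Suc n)) ` {T \<in> ?S. f n \<in> fst T}"
    unfolding path_segment_Suc[OF le0] Suc.IH[OF inj, symmetric] by (rule subtrees_add_leaf)
  moreover have "{T \<in> ?S. f n \<in> fst T} = (\<lambda>i. path_segment f i n) ` {..n}"
  proof (intro equalityI subsetI)
    fix T assume "T \<in> {T \<in> ?S. f n \<in> fst T}"
    then obtain i j t where "T = path_segment f i j" "i \<le> t" "t \<le> j" "j \<le> n" "f n = f t"
      by auto
    moreover from this have "t = n" using inj by (auto dest: inj_onD)
    ultimately show "T \<in> (\<lambda>i. path_segment f i n) ` {..n}" by auto
  qed auto
  moreover have "add_leaf (f n) (f (Suc n)) ` (\<lambda>i. path_segment f i n) ` {..n} =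
      (\<lambda>i. path_segment f i (Suc n)) ` {..n}"
    unfolding image_image by (rule image_cong) (simp_all add: path_segment_Suc)
  ultimately show ?case by (simp add: path_segments_upto_Suc)
qed

section \<open>Subtrees of cycles\<close>

lemma inj_on_add_mod: "inj_on (\<lambda>t. (s + t) mod c) {..<c::nat}"
proof (rule inj_onI)
  have le_case: "t = t'" if "(s + t) mod c = (s + t') mod c" "t < c" "t' < c" "t' \<le> t" for t t' :: nat
  proof -
    have "c dvd t - t'" using that mod_eq_dvd_iff_nat[of "s + t'" "s + t" c] by simp
    moreover have "t - t' < c" using that by linarith
    ultimately have "t - t' = 0" using nat_dvd_not_less by blast
    then show ?thesis using that by linarith
  qed
  show "t = t'" if "t \<in> {..<c}" "t' \<in> {..<c}" "(s + t) mod c = (s + t') mod c" for t t'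
    using that le_case[of t t'] le_case[of t' t] by (metis lessThan_iff nat_le_linear)
qed

lemma cycle_edge_eq_iff:
  assumes "a < c" "b < c" "3 \<le> c"
  shows "{a, Suc a mod c} = {b, Suc b mod c} \<longleftrightarrow> a = b"
proof
  assume "{a, Suc a mod c} = {b, Suc b mod c}"
  moreover have "Suc (Suc a mod c) mod c \<noteq> a" using Suc_Suc_mod_neq assms by (simp add: mod_Suc_eq)
  ultimately show "a = b" by (auto simp: doubleton_eq_iff)
qed simp

definition arc :: "nat \<Rightarrow> nat \<Rightarrow> nat \<Rightarrow> graph" where
  "arc c s k = path_segment (\<lambda>t. (s + t) mod c) 0 k"

lemma path_segment_mod_eq_arc:
  "i \<le> j \<Longrightarrow> path_segment (\<lambda>t. (s + t) mod c) i j = arc c ((s + i) mod c) (j - i)"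
  unfolding arc_def by (subst path_segment_shift) (simp_all add: mod_add_left_eq add.assoc)

lemma fst_cycle_with_path: "fst (cycle_with_path c p) = {0..<c + p}"
  by (simp add: cycle_with_path_def)

lemma snd_cycle_with_path_0: "snd (cycle_with_path c 0) = {{i, Suc i mod c} | i. i < c}"
  by (simp add: cycle_with_path_def)

lemma path_segment_mod_subgraph_cycle:
  assumes "0 < c"
  shows "fst (path_segment (\<lambda>t. (s + t) mod c) i j) \<subseteq> fst (cycle_with_path c 0)"
    and "snd (path_segment (\<lambda>t. (s + t) mod c) i j) \<subseteq> snd (cycle_with_path c 0)"
  using assms by (auto simp: fst_cycle_with_path snd_cycle_with_path_0 path_segment_def mod_Suc_eq)

lemma fst_path_segment_mod_eq_cycle:
  assumes "0 < c"
  shows "fst (path_segment (\<lambda>t. (s + t) mod c) 0 (c - 1)) = fst (cycle_with_path c 0)"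
proof (rule card_subset_eq)
  have "{0..c - 1} = {..<c}" using assms by auto
  then show
    "card (fst (path_segment (\<lambda>t. (s + t) mod c) 0 (c - 1))) = card (fst (cycle_with_path c 0))"
    using card_image[OF inj_on_add_mod[of s c]] by (simp add: fst_cycle_with_path)
qed (use path_segment_mod_subgraph_cycle[OF assms] in \<open>simp_all add: fst_cycle_with_path\<close>)

lemma cycle_edges_subset_path_segment_mod:
  assumes "k < c"
  shows "snd (cycle_with_path c 0) - {{k, Suc k mod c}} \<subseteq>
    snd (path_segment (\<lambda>t. (Suc k + t) mod c) 0 (c - 1))"
proof
  fix e assume "e \<in> snd (cycle_with_path c 0) - {{k, Suc k mod c}}"
  then obtain x where x: "x < c" "x \<noteq> k" "e = {x, Suc x mod c}" by (auto simp: snd_cycle_with_path_0)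
  define t where "t = (if Suc k \<le> x then x - Suc k else x + c - Suc k)"
  have t: "(Suc k + t) mod c = x" "t < c - 1" using x assms by (auto simp: t_def)
  then have "Suc x mod c = (Suc k + Suc t) mod c" by (metis add_Suc_right mod_Suc_eq)
  then have "e = {(Suc k + t) mod c, (Suc k + Suc t) mod c}" using x t by simp
  then show "e \<in> snd (path_segment (\<lambda>t. (Suc k + t) mod c) 0 (c - 1))"
    using \<open>t < c - 1\<close> by (auto simp: path_segment_def)
qed

lemma has_cycle_if_cycle_edges:
  assumes c: "3 \<le> c" and G: "is_graph G" and edges: "\<forall>i<c. {i, Suc i mod c} \<in> snd G"
  shows "has_cycle G"
  unfolding has_cycle_def
proof (intro exI[of _ "[0..<c]"] conjI allI impI)
  show "3 \<le> length [0..<c]" "distinct [0..<c]" using c by simp_all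
  show "set [0..<c] \<subseteq> fst G" using edges is_graph_edgeD[OF G] by auto
  show "{[0..<c] ! i, [0..<c] ! Suc i} \<in> snd G" if "Suc i < length [0..<c]" for i
    using that edges[rule_format, of i] by simp
  have "c - 1 < c" using c by simp
  then have "{c - 1, Suc (c - 1) mod c} \<in> snd G" using edges by blast
  moreover have "Suc (c - 1) mod c = 0" "last [0..<c] = c - 1" "hd [0..<c] = 0"
    using c by (simp_all add: last_upt hd_upt)
  ultimately show "{last [0..<c], hd [0..<c]} \<in> snd G" by (simp only:)
qed

lemma subtrees_cycle:
  assumes c: "3 \<le> c"
  shows "subtrees (cycle_with_path c 0) = (\<lambda>(k, s). arc c s k) ` ({..<c} \<times> {..<c})"
proof (intro equalityI subsetI)
  \<comment> \<open>the Hamiltonian path of the cycle starting at s;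
    for s = Suc k it misses only the edge {k, Suc k mod c}\<close>
  let ?R = "\<lambda>s. path_segment (\<lambda>t. (s + t) mod c) 0 (c - 1)"
  have "{..c - 1} = {..<c}" using c by auto
  then have subtrees_R:
    "subtrees (?R s) = {path_segment (\<lambda>t. (s + t) mod c) i j | i j. i \<le> j \<and> j \<le> c - 1}" for s
    using subtrees_path_segment inj_on_add_mod by simp
  {
    fix T assume "T \<in> subtrees (cycle_with_path c 0)"
    then have "is_tree T"
      and sub: "fst T \<subseteq> fst (cycle_with_path c 0)" "snd T \<subseteq> snd (cycle_with_path c 0)"
      by (simp_all add: subtrees_def subtree_of_def)
    moreover have "is_graph T" "\<not> has_cycle T" using \<open>is_tree T\<close> by (simp_all add: is_tree_def)
    ultimately obtain k where k: "k < c" "{k, Suc k mod c} \<notin> snd T"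
      using has_cycle_if_cycle_edges[OF c, of T] by blast
    then have "T \<in> subtrees (?R (Suc k))"
      using \<open>is_tree T\<close> sub cycle_edges_subset_path_segment_mod[OF k(1)]
        fst_path_segment_mod_eq_cycle[of c "Suc k"] c
      by (auto simp: subtrees_def subtree_of_def)
    then obtain i j where ij: "i \<le> j" "j \<le> c - 1" "T = path_segment (\<lambda>t. (Suc k + t) mod c) i j"
      using subtrees_R[of "Suc k"] by blast
    then have "T = arc c ((Suc k + i) mod c) (j - i)"
      using path_segment_mod_eq_arc[OF ij(1), of "Suc k" c] by simp
    moreover have "(Suc k + i) mod c < c" "j - i < c" using c ij by auto
    ultimately show "T \<in> (\<lambda>(k, s). arc c s k) ` ({..<c} \<times> {..<c})" by force
  }
  fix T assume "T \<in> (\<lambda>(k, s). arc c s k) ` ({..<c} \<times> {..<c})"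
  then obtain k s where "k < c" "T = arc c s k" by auto
  then have "subtree_of T (?R s)" using subtrees_R unfolding arc_def subtrees_def by fastforce
  then have "subtree_of T (cycle_with_path c 0)"
    by (rule subtree_of_mono) (use path_segment_mod_subgraph_cycle c in auto)
  then show "T \<in> subtrees (cycle_with_path c 0)" by (simp add: subtrees_def)
qed

lemma card_fst_arc:
  assumes "k < c"
  shows "card (fst (arc c s k)) = Suc k"
proof -
  have "inj_on (\<lambda>t. (s + t) mod c) {0..k}"
    using assms by (auto intro: inj_on_subset[OF inj_on_add_mod])
  then show ?thesis by (simp add: arc_def card_image)
qed

lemma arc_no_edge_into_start:
  assumes c: "3 \<le> c" and "s < c" "k < c" "x < c" "Suc x mod c = s"
  shows "{x, s} \<notin> snd (arc c s k)"
proof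
  assume "{x, s} \<in> snd (arc c s k)"
  then obtain t where t: "t < k" "{x, s} = {(s + t) mod c, (s + Suc t) mod c}"
    by (auto simp: arc_def path_segment_def)
  have "Suc ((s + t) mod c) mod c = (s + Suc t) mod c" by (simp add: mod_Suc_eq)
  then have "{x, Suc x mod c} = {(s + t) mod c, Suc ((s + t) mod c) mod c}"
    using t assms by simp
  then have "x = (s + t) mod c" using cycle_edge_eq_iff c \<open>x < c\<close> by simp
  then have "(s + Suc t) mod c = (s + 0) mod c" using assms by (simp add: mod_Suc_eq)
  moreover have "Suc t \<in> {..<c}" "0 \<in> {..<c}" using t assms by simp_all
  ultimately have "Suc t = 0" by (rule inj_onD[OF inj_on_add_mod])
  then show False by simp
qed

lemma inj_on_arc:
  assumes c: "3 \<le> c"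
  shows "inj_on (\<lambda>(k, s). arc c s k) ({..<c} \<times> {..<c})"
proof (rule inj_onI, clarsimp)
  fix k s k' s' assume kc: "k < c" "s < c" "k' < c" "s' < c" and eq: "arc c s k = arc c s' k'"
  then have "k = k'" using card_fst_arc[of k c s] card_fst_arc[of k' c s'] by simp
  have "s \<in> fst (arc c s k)"
    using kc by (simp add: arc_def image_iff) (metis add_0_right atLeastAtMost_iff mod_less zero_le)
  then have "s \<in> fst (arc c s' k')" by (simp only: eq)
  then obtain t where t: "t \<le> k'" "s = (s' + t) mod c" by (auto simp: arc_def)
  have "t = 0"
  proof (rule ccontr)
    assume "t \<noteq> 0"
    then have "{(s' + (t - 1)) mod c, (s' + Suc (t - 1)) mod c} \<in> snd (arc c s' k')"
      unfolding arc_def path_segment_def snd_conv using t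
      by (intro image_eqI[where x = "t - 1"]) auto
    then have "{(s' + (t - 1)) mod c, (s' + Suc (t - 1)) mod c} \<in> snd (arc c s k)"
      by (simp only: eq)
    moreover have "Suc ((s' + (t - 1)) mod c) mod c = s" "(s' + Suc (t - 1)) mod c = s"
      using t \<open>t \<noteq> 0\<close> by (simp_all add: mod_Suc_eq)
    moreover have "(s' + (t - 1)) mod c < c" using c by simp
    ultimately show False using arc_no_edge_into_start[OF c kc(2,1)] by simp
  qed
  then show "k = k' \<and> s = s'" using \<open>k = k'\<close> t kc by simp
qed

lemma zero_in_arc_iff:
  assumes "s < c" "k < c"
  shows "0 \<in> fst (arc c s k) \<longleftrightarrow> s \<in> insert 0 {c - k..<c}"
proof
  assume "0 \<in> fst (arc c s k)"
  then obtain t where t: "t \<le> k" "(s + t) mod c = 0" by (auto simp: arc_def)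
  then have "s + t = 0 \<or> s + t = c"
    using t assms by (cases "s + t < c") (auto simp: le_mod_geq)
  then show "s \<in> insert 0 {c - k..<c}" using t assms by auto
next
  assume "s \<in> insert 0 {c - k..<c}"
  then have "(s + (c - s) mod c) mod c = 0" "(c - s) mod c \<le> k" using assms by auto
  then show "0 \<in> fst (arc c s k)" by (force simp: arc_def)
qed

lemma card_subtrees_cycle:
  assumes "3 \<le> c"
  shows "card (subtrees (cycle_with_path c 0)) = c * c"
  using card_image[OF inj_on_arc[OF assms]] by (simp add: subtrees_cycle[OF assms])

lemma card_subtrees_cycle_containing_0:
  assumes c: "3 \<le> c"
  shows "2 * card {T \<in> subtrees (cycle_with_path c 0). 0 \<in> fst T} = c * (c + 1)"
proof -
  let ?I = "SIGMA k:{..<c}. insert 0 {c - k..<c}"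
  have "{T \<in> subtrees (cycle_with_path c 0). 0 \<in> fst T} = (\<lambda>(k, s). arc c s k) ` ?I"
    using zero_in_arc_iff unfolding subtrees_cycle[OF c] by fastforce
  moreover have "inj_on (\<lambda>(k, s). arc c s k) ?I"
    by (rule inj_on_subset[OF inj_on_arc[OF c]]) auto
  moreover have "card ?I = (\<Sum>k<c. Suc k)" by simp
  moreover have "2 * (\<Sum>k<n. Suc k) = n * (n + 1)" for n :: nat by (induction n) auto
  ultimately show ?thesis by (simp add: card_image)
qed

section \<open>Cycles with a pendent path\<close>

definition pendent_end :: "nat \<Rightarrow> nat \<Rightarrow> nat" where
  "pendent_end c p = (if p = 0 then 0 else c + p - 1)"

lemma cycle_with_path_Suc:
  "cycle_with_path c (Suc p) = add_leaf (pendent_end c p) (c + p) (cycle_with_path c p)"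
proof -
  have "{0..<c + Suc p} = insert (c + p) {0..<c + p}" by auto
  moreover have "{g i | i. i < Suc p} = insert (g p) {g i | i. i < p}" for g :: "nat \<Rightarrow> nat set"
    by (auto simp: less_Suc_eq)
  ultimately show ?thesis by (simp add: cycle_with_path_def add_leaf_def pendent_end_def)
qed

lemma is_graph_cycle_with_path:
  assumes "2 \<le> c"
  shows "is_graph (cycle_with_path c p)"
proof (induction p)
  case 0
  have neq: "i \<noteq> Suc i mod c" if "i < c" for i
  proof (cases "Suc i < c")
    case False
    then have "Suc i = c" using that by simp
    then have "Suc i mod c = 0" "i \<noteq> 0" using assms by auto
    then show ?thesis by simp
  qed simp
  show ?case
    unfolding is_graph_def snd_cycle_with_path_0 fst_cycle_with_path
  proof
    fix e assume "e \<in> {{i, Suc i mod c} | i. i < c}"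
    then obtain i where "i < c" "e = {i, Suc i mod c}" by blast
    then show "\<exists>a b. a \<in> {0..<c + 0} \<and> b \<in> {0..<c + 0} \<and> a \<noteq> b \<and> e = {a, b}"
      using neq assms by (intro exI[of _ i] exI[of _ "Suc i mod c"]) simp
  qed
next
  case (Suc p)
  then show ?case
    unfolding cycle_with_path_Suc
    using assms by (intro is_graph_add_leaf) (auto simp: fst_cycle_with_path pendent_end_def)
qed

lemma finite_cycle_with_path:
  "finite (fst (cycle_with_path c p))" "finite (snd (cycle_with_path c p))"
  by (simp_all add: cycle_with_path_def)

lemma card_subtrees_cycle_with_path_Suc:
  assumes "2 \<le> c"
  shows "card {T \<in> subtrees (cycle_with_path c (Suc p)). P (fst T)} =
    card {T \<in> subtrees (cycle_with_path c p). P (fst T)} + (if P {c + p} then 1 else 0)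
    + card {T \<in> subtrees (cycle_with_path c p).
        pendent_end c p \<in> fst T \<and> P (insert (c + p) (fst T))}"
  unfolding cycle_with_path_Suc
  using assms by (intro card_subtrees_add_leaf is_graph_cycle_with_path finite_cycle_with_path)
    (auto simp: fst_cycle_with_path pendent_end_def)

lemma no_subtree_contains_next_vertex [simp]:
  "{T \<in> subtrees (cycle_with_path c p). c + p \<in> fst T} = {}"
  "{T \<in> subtrees (cycle_with_path c p). c + p \<in> fst T \<and> Q T} = {}"
  by (auto simp: subtrees_def subtree_of_def fst_cycle_with_path)

lemma card_subtrees_containing_0_and_pendent_end:
  assumes c: "3 \<le> c"
  shows "card {T \<in> subtrees (cycle_with_path c p). pendent_end c p \<in> fst T \<and> 0 \<in> fst T} =
    num_subtrees_at 0 (cycle_with_path c 0)"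
proof (induction p)
  case 0
  then show ?case by (simp add: pendent_end_def num_subtrees_at_eq)
next
  case (Suc p)
  have "pendent_end c (Suc p) = c + p" by (simp add: pendent_end_def)
  then show ?case
    using card_subtrees_cycle_with_path_Suc[of c p "\<lambda>X. c + p \<in> X \<and> 0 \<in> X"] c Suc.IH by simp
qed

lemma num_subtrees_at_pendent_end:
  assumes c: "3 \<le> c"
  shows "num_subtrees_at (pendent_end c p) (cycle_with_path c p) =
    p + num_subtrees_at 0 (cycle_with_path c 0)"
proof (induction p)
  case 0
  then show ?case by (simp add: pendent_end_def)
next
  case (Suc p)
  have "pendent_end c (Suc p) = c + p" by (simp add: pendent_end_def)
  then show ?case
    using card_subtrees_cycle_with_path_Suc[of c p "\<lambda>X. c + p \<in> X"] c Suc.IH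
    by (simp add: num_subtrees_at_eq)
qed

lemma num_subtrees_at_0_cycle_with_path:
  assumes c: "3 \<le> c"
  shows "num_subtrees_at 0 (cycle_with_path c p) = (p + 1) * num_subtrees_at 0 (cycle_with_path c 0)"
proof (induction p)
  case (Suc p)
  then show ?case
    using card_subtrees_cycle_with_path_Suc[of c p "\<lambda>X. 0 \<in> X"] c
      card_subtrees_containing_0_and_pendent_end[OF c, of p]
    by (simp add: num_subtrees_at_eq)
qed simp

lemma card_subtrees_cycle_with_path:
  assumes c: "3 \<le> c"
  shows "2 * card (subtrees (cycle_with_path c p)) =
    2 * c * c + p * (p + 1) + 2 * p * num_subtrees_at 0 (cycle_with_path c 0)"
proof (induction p)
  case 0
  then show ?case using card_subtrees_cycle[OF c] by simp
next
  case (Suc p)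
  then show ?case
    using card_subtrees_cycle_with_path_Suc[of c p "\<lambda>_. True"] c
      num_subtrees_at_pendent_end[OF c, of p]
    by (simp add: num_subtrees_at_eq algebra_simps)
qed

lemma num_subtrees_at_0_cycle_with_path_formula:
  assumes "3 \<le> c"
  shows "2 * num_subtrees_at 0 (cycle_with_path c p) = (p + 1) * (c * (c + 1))"
  using num_subtrees_at_0_cycle_with_path[OF assms, of p] card_subtrees_cycle_containing_0[OF assms]
  by (simp add: num_subtrees_at_eq)

lemma num_subtrees_cycle_with_path_formula:
  assumes "3 \<le> c"
  shows "2 * num_subtrees (cycle_with_path c p) = 2 * c * c + p * (p + 1) + p * (c * (c + 1)) + 2"
  using card_subtrees_cycle_with_path[OF assms, of p] card_subtrees_cycle_containing_0[OF assms]
  by (simp add: num_subtrees_def subtrees_def num_subtrees_at_eq)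

theorem lemma7:
  fixes l1 l2 :: nat
  assumes "l1 \<ge> l2" and "l2 \<ge> 3"
  shows "num_subtrees (cycle_with_path l1 l2) \<ge> num_subtrees (cycle_with_path l2 l1)
    \<and> num_subtrees_at 0 (cycle_with_path l1 l2) \<ge> num_subtrees_at 0 (cycle_with_path l2 l1)
    \<and> (num_subtrees (cycle_with_path l1 l2) = num_subtrees (cycle_with_path l2 l1) \<longleftrightarrow> l1 = l2)
    \<and> (num_subtrees_at 0 (cycle_with_path l1 l2) = num_subtrees_at 0 (cycle_with_path l2 l1) \<longleftrightarrow> l1 = l2)"
proof (cases "l1 = l2")
  case False
  obtain d where d: "l1 = l2 + d" and "d > 0" using assms(1) False le_Suc_ex by force
  have c: "3 \<le> l1" "3 \<le> l2" using assms by auto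
  have at_0: "2 * num_subtrees_at 0 (cycle_with_path l1 l2) =
      2 * num_subtrees_at 0 (cycle_with_path l2 l1) + (l1 + 1) * (l2 + 1) * d"
    using num_subtrees_at_0_cycle_with_path_formula[OF c(1), of l2]
      num_subtrees_at_0_cycle_with_path_formula[OF c(2), of l1]
    by (simp add: d algebra_simps)
  have total: "2 * num_subtrees (cycle_with_path l1 l2) + 2 * d =
      2 * num_subtrees (cycle_with_path l2 l1) + (l1 + 1) * (l2 + 1) * d"
    using num_subtrees_cycle_with_path_formula[OF c(1), of l2]
      num_subtrees_cycle_with_path_formula[OF c(2), of l1]
    by (simp add: d algebra_simps)
  have "4 * 4 \<le> (l1 + 1) * (l2 + 1)" using c by (intro mult_le_mono) auto
  then have "16 * d \<le> (l1 + 1) * (l2 + 1) * d" by simp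
  then show ?thesis using at_0 total \<open>d > 0\<close> False by linarith
qed simp

end
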